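(* For every $p>0$ there exists $C_p>0$ such that for every $x\in\mathbb Z_{\ge0}$ and all integers $0\le m\le k\le n$, $$\mathbf E^n_x\big[|S_k-S_m|^p\big]\le C_p\,|k-m|^{p/2}.$$
   Context: $\mathbf P^n_x$ is the uniform probability measure on the finite set of paths $(s_0,\dots,s_n)\in\mathbb Z_{\ge0}^{n+1}$ with $s_0=x$ and $|s_{i+1}-s_i|=1$ for all $i$ (simple symmetric random walk conditioned to stay non-negative up to time $n$), $S$ is its coordinate process and $\mathbf E^n_x$ the corresponding expectation. *)

theory Defs
  imports "HOL-Analysis.Analysis"
begin

text \<open>Paths (s_0,...,s_n) of a simple random walk staying in Z_{>=0}, started at x,
  represented as lists of naturals of length n+1.\<close>
definition nnpaths :: "nat \<Rightarrow> nat \<Rightarrow> nat list set" where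
  "nnpaths n x = {s. length s = Suc n \<and> s ! 0 = x \<and>
      (\<forall>i<n. \<bar>int (s ! Suc i) - int (s ! i)\<bar> = 1)}"

definition Ewalk :: "nat \<Rightarrow> nat \<Rightarrow> (nat list \<Rightarrow> real) \<Rightarrow> real" where
  "Ewalk n x F = (\<Sum>s\<in>nnpaths n x. F s) / real (card (nnpaths n x))"

end

theory Submission
  imports Defs
begin

text \<open>Let h(r, z) = npaths r z count the non-negative paths of length r started at z. Under
  the uniform measure on nnpaths n x the walk is a Markov chain: given S_i = z, the rest of the
  path is uniform on nnpaths (n - i) z, so it steps up with probability h(r-1, z+1)/h(r, z).
  As h(r, \<cdot>) is increasing and concave (with h(r, -1) = 0), the drift from z lies in
  [0, 1/(z+1)]. Write D = S_i - y and (D \<plusminus> 1)^{2q+2} = E(D) \<plusminus> g(D) with E, g the even and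
  odd parts; then (S_{i+1} - y)^{2q+2} = E(D) + g(D)(S_{i+1} - S_i), and the drift term is at
  most max(g(D), 0)/(S_i + 1), which is O(D^{2q} + 1) because D \<le> S_i. Hence the 2q-th moment
  of S_j - S_0 grows like j^q, by induction on q and j; the Markov property at time m moves this
  to S_k - S_m, and |X|^p \<le> j^{p/2} (1 + X^{2q}/j^q) for 2q \<ge> p finishes the proof.\<close>

lemma nnpaths_0: "nnpaths 0 x = {[x]}"
proof -
  have "s \<in> nnpaths 0 x \<longleftrightarrow> s = [x]" for s
    by (cases s) (auto simp: nnpaths_def)
  thus ?thesis by auto
qed

lemma length_nnpaths: "s \<in> nnpaths n x \<Longrightarrow> length s = Suc n"
  by (simp add: nnpaths_def)

lemma nth_0_nnpaths: "s \<in> nnpaths n x \<Longrightarrow> s ! 0 = x"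
  by (simp add: nnpaths_def)

lemma nth_Suc_nnpaths:
  "s \<in> nnpaths n x \<Longrightarrow> i < n \<Longrightarrow>
    real (s ! Suc i) = real (s ! i) + 1 \<or> real (s ! Suc i) = real (s ! i) - 1"
  unfolding nnpaths_def by (auto simp: abs_if split: if_splits)

lemma Cons_in_nnpaths_Suc:
  "y # t \<in> nnpaths (Suc n) x \<longleftrightarrow>
    y = x \<and> t \<in> nnpaths n (t ! 0) \<and> \<bar>int (t ! 0) - int x\<bar> = 1"
proof
  assume "y # t \<in> nnpaths (Suc n) x"
  hence len: "length t = Suc n" and y: "y = x"
    and step: "\<And>i. i < Suc n \<Longrightarrow> \<bar>int ((y # t) ! Suc i) - int ((y # t) ! i)\<bar> = 1"
    by (auto simp: nnpaths_def)
  have "t \<in> nnpaths n (t ! 0)"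
    using len step[of "Suc _"] by (simp add: nnpaths_def)
  thus "y = x \<and> t \<in> nnpaths n (t ! 0) \<and> \<bar>int (t ! 0) - int x\<bar> = 1"
    using step[of 0] y by simp
next
  assume H: "y = x \<and> t \<in> nnpaths n (t ! 0) \<and> \<bar>int (t ! 0) - int x\<bar> = 1"
  hence len: "length t = Suc n"
    and step: "\<And>i. i < n \<Longrightarrow> \<bar>int (t ! Suc i) - int (t ! i)\<bar> = 1"
    by (auto simp: nnpaths_def)
  have "\<bar>int ((x # t) ! Suc i) - int ((x # t) ! i)\<bar> = 1" if "i < Suc n" for i
    using H step that by (cases i) auto
  thus "y # t \<in> nnpaths (Suc n) x" using H len by (auto simp: nnpaths_def)
qed

lemma nnpaths_Suc:
  "nnpaths (Suc n) x = Cons x ` (nnpaths n (Suc x) \<union> (if x > 0 then nnpaths n (x - 1) else {}))"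
proof (intro set_eqI iffI)
  fix s assume s: "s \<in> nnpaths (Suc n) x"
  then obtain y t where st: "s = y # t" by (cases s) (auto simp: nnpaths_def)
  with s have "y = x" "t \<in> nnpaths n (t ! 0)" "\<bar>int (t ! 0) - int x\<bar> = 1"
    using Cons_in_nnpaths_Suc by blast+
  moreover from this have "t ! 0 = Suc x \<or> (x > 0 \<and> t ! 0 = x - 1)" by auto
  ultimately show "s \<in> Cons x ` (nnpaths n (Suc x) \<union> (if x > 0 then nnpaths n (x - 1) else {}))"
    using st by auto
next
  fix s assume "s \<in> Cons x ` (nnpaths n (Suc x) \<union> (if x > 0 then nnpaths n (x - 1) else {}))"
  then obtain t where "s = x # t" "t \<in> nnpaths n (Suc x) \<or> (x > 0 \<and> t \<in> nnpaths n (x - 1))"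
    by (auto split: if_splits)
  thus "s \<in> nnpaths (Suc n) x"
    using nth_0_nnpaths Cons_in_nnpaths_Suc by auto
qed

lemma finite_nnpaths: "finite (nnpaths n x)"
  by (induction n arbitrary: x) (auto simp: nnpaths_0 nnpaths_Suc)

lemma nnpaths_nonempty: "nnpaths n x \<noteq> {}"
  by (induction n arbitrary: x) (auto simp: nnpaths_0 nnpaths_Suc)

lemma sum_nnpaths_Suc:
  fixes G :: "nat list \<Rightarrow> real"
  shows "(\<Sum>s\<in>nnpaths (Suc n) x. G s) = (\<Sum>t\<in>nnpaths n (Suc x). G (x # t))
     + (if x > 0 then (\<Sum>t\<in>nnpaths n (x - 1). G (x # t)) else 0)"
proof -
  have disjoint: "nnpaths n (Suc x) \<inter> (if x > 0 then nnpaths n (x - 1) else {}) = {}"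
    using nth_0_nnpaths[of _ n "Suc x"] nth_0_nnpaths[of _ n "x - 1"] by force
  have "(\<Sum>s\<in>nnpaths (Suc n) x. G s) =
     (\<Sum>t\<in>nnpaths n (Suc x) \<union> (if x > 0 then nnpaths n (x - 1) else {}). G (x # t))"
    unfolding nnpaths_Suc by (subst sum.reindex) (auto simp: inj_on_def)
  also have "\<dots> = (\<Sum>t\<in>nnpaths n (Suc x). G (x # t)) +
      (\<Sum>t\<in>(if x > 0 then nnpaths n (x - 1) else {}). G (x # t))"
    by (rule sum.union_disjoint) (auto simp: finite_nnpaths disjoint)
  finally show ?thesis by simp
qed

text \<open>The Markov property at time m: path sums of functionals of the future after time m are
  compared fibrewise over the position at time m.\<close>
lemma sum_nnpaths_drop_mono:
  fixes F H :: "nat list \<Rightarrow> real"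
  assumes "m \<le> n" "\<And>z. (\<Sum>t\<in>nnpaths (n - m) z. F t) \<le> (\<Sum>t\<in>nnpaths (n - m) z. H t)"
  shows "(\<Sum>s\<in>nnpaths n x. F (drop m s)) \<le> (\<Sum>s\<in>nnpaths n x. H (drop m s))"
  using assms
proof (induction m arbitrary: n x)
  case 0 thus ?case by simp
next
  case (Suc m)
  then obtain n' where n: "n = Suc n'" by (cases n) auto
  have IH: "(\<Sum>s\<in>nnpaths n' y. F (drop m s)) \<le> (\<Sum>s\<in>nnpaths n' y. H (drop m s))" for y
    using Suc.IH[of n' y] Suc.prems n by simp
  show ?case unfolding n sum_nnpaths_Suc
    using IH[of "Suc x"] IH[of "x - 1"] by (auto intro: add_mono)
qed

definition npaths :: "nat \<Rightarrow> nat \<Rightarrow> real" where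
  "npaths r z = real (card (nnpaths r z))"

lemma npaths_0: "npaths 0 z = 1"
  by (simp add: npaths_def nnpaths_0)

lemma npaths_Suc: "npaths (Suc r) z = npaths r (Suc z) + (if z > 0 then npaths r (z - 1) else 0)"
  using sum_nnpaths_Suc[of "\<lambda>_. 1" r z] by (simp add: npaths_def)

lemma npaths_pos: "npaths r z > 0"
  using finite_nnpaths nnpaths_nonempty by (simp add: npaths_def card_gt_0_iff)

lemma npaths_mono: "npaths r z \<le> npaths r (Suc z)"
proof (induction r arbitrary: z)
  case 0 thus ?case by (simp add: npaths_0)
next
  case (Suc r)
  have "npaths r (z - 1) \<le> npaths r z" if "z > 0" using Suc.IH[of "z - 1"] that by simp
  thus ?case using Suc.IH[of "Suc z"] Suc.IH[of z] npaths_pos[of r z] npaths_pos[of r 0]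
    by (cases z) (simp_all add: npaths_Suc)
qed

text \<open>The second conjunct is concavity at z = 0 for the extension npaths r (-1) = 0;
  the induction needs both at once.\<close>
lemma npaths_concave:
  "npaths r z + npaths r (Suc (Suc z)) \<le> 2 * npaths r (Suc z) \<and> npaths r 1 \<le> 2 * npaths r 0"
proof (induction r arbitrary: z)
  case 0 thus ?case by (simp add: npaths_0)
next
  case (Suc r)
  have "npaths (Suc r) z + npaths (Suc r) (Suc (Suc z)) \<le> 2 * npaths (Suc r) (Suc z)"
  proof (cases z)
    case 0 thus ?thesis
      using Suc.IH[of 0] Suc.IH[of 1] by (simp add: npaths_Suc numeral_2_eq_2)
  next
    case (Suc w) thus ?thesis
      using Suc.IH[of "Suc (Suc w)"] Suc.IH[of w] by (simp add: npaths_Suc)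
  qed
  moreover have "npaths (Suc r) 1 \<le> 2 * npaths (Suc r) 0"
    using Suc.IH[of 0] by (simp add: npaths_Suc)
  ultimately show ?case by simp
qed

lemma npaths_ratio: "real (Suc w) * npaths r (Suc w) \<le> real (Suc (Suc w)) * npaths r w"
proof (induction w)
  case 0 thus ?case using npaths_concave[of r 0] by simp
next
  case (Suc w)
  have "npaths r (Suc (Suc w)) \<le> 2 * npaths r (Suc w) - npaths r w"
    using npaths_concave[of r w] by simp
  hence "real (Suc (Suc w)) * npaths r (Suc (Suc w))
      \<le> real (Suc (Suc w)) * (2 * npaths r (Suc w) - npaths r w)"
    by (intro mult_left_mono) auto
  thus ?case using Suc.IH by (simp add: algebra_simps)
qed

definition drift :: "nat \<Rightarrow> nat \<Rightarrow> real" where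
  "drift r z = (\<Sum>t\<in>nnpaths r z. real (t ! 1) - real (t ! 0))"

lemma drift_Suc: "drift (Suc r) z = npaths r (Suc z) - (if z > 0 then npaths r (z - 1) else 0)"
proof -
  have "drift (Suc r) z = (\<Sum>t\<in>nnpaths r (Suc z). real (t ! 0) - real z)
     + (if z > 0 then (\<Sum>t\<in>nnpaths r (z - 1). real (t ! 0) - real z) else 0)"
    unfolding drift_def by (subst sum_nnpaths_Suc) simp
  thus ?thesis by (simp add: nth_0_nnpaths npaths_def of_nat_diff)
qed

lemma drift_nonneg: "drift (Suc r) z \<ge> 0"
proof -
  have "npaths r (z - 1) \<le> npaths r (Suc z)" if "z > 0"
    using npaths_mono[of r "z - 1"] npaths_mono[of r z] that by simp
  thus ?thesis using npaths_pos[of r "Suc z"] by (cases z) (simp_all add: drift_Suc)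
qed

lemma drift_le: "drift (Suc r) z * real (Suc z) \<le> npaths (Suc r) z"
proof (cases z)
  case 0 thus ?thesis by (simp add: drift_Suc npaths_Suc)
next
  case (Suc w)
  let ?a = "real (Suc w)" and ?b = "real (Suc (Suc w))" and ?c = "real (Suc (Suc (Suc w)))"
  have "?a * ?b * npaths r (Suc (Suc w)) \<le> ?a * ?c * npaths r (Suc w)"
    using mult_left_mono[OF npaths_ratio[of "Suc w" r], of ?a] by (simp add: mult.assoc)
  also have "\<dots> \<le> ?c * ?b * npaths r w"
    using mult_left_mono[OF npaths_ratio[of w r], of ?c] by (simp add: algebra_simps)
  finally have "?b * (?a * npaths r (Suc (Suc w))) \<le> ?b * (?c * npaths r w)"
    by (simp add: algebra_simps)
  hence "?a * npaths r (Suc (Suc w)) \<le> ?c * npaths r w"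
    by (rule mult_left_le_imp_le) simp
  thus ?thesis using Suc by (simp add: drift_Suc npaths_Suc algebra_simps)
qed

lemma sum_weighted_increment_le:
  fixes G :: "nat \<Rightarrow> real"
  assumes "i < N"
  shows "(\<Sum>s\<in>nnpaths N y. G (s ! i) * (real (s ! Suc i) - real (s ! i)))
       \<le> (\<Sum>s\<in>nnpaths N y. max (G (s ! i)) 0 / real (Suc (s ! i)))"
proof -
  define F where "F t = G (t ! 0) * (real (t ! 1) - real (t ! 0))" for t :: "nat list"
  define H where "H t = max (G (t ! 0)) 0 / real (Suc (t ! 0))" for t :: "nat list"
  have "(\<Sum>s\<in>nnpaths N y. F (drop i s)) \<le> (\<Sum>s\<in>nnpaths N y. H (drop i s))"
  proof (rule sum_nnpaths_drop_mono)
    show "i \<le> N" using assms by simp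
    fix z
    obtain r where r: "N - i = Suc r" using assms by (metis Suc_diff_Suc)
    have "G z * drift (Suc r) z \<le> max (G z) 0 * drift (Suc r) z"
      using drift_nonneg[of r z] by (intro mult_right_mono) auto
    also have "\<dots> \<le> max (G z) 0 * (npaths (Suc r) z / real (Suc z))"
      using drift_le[of r z] by (intro mult_left_mono) (auto simp: field_simps)
    finally show "(\<Sum>t\<in>nnpaths (N - i) z. F t) \<le> (\<Sum>t\<in>nnpaths (N - i) z. H t)"
      unfolding r F_def H_def drift_def npaths_def
      by (simp add: nth_0_nnpaths sum_distrib_left mult_ac)
  qed
  moreover have "drop i s ! 0 = s ! i" "drop i s ! 1 = s ! Suc i" if "s \<in> nnpaths N y" for s
    using length_nnpaths[OF that] assms by simp_all
  ultimately show ?thesis by (simp add: F_def H_def cong: sum.cong)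
qed

lemma abs_power_le_even_power:
  fixes D :: real assumes "even m" "k \<le> m" shows "\<bar>D\<bar> ^ k \<le> D ^ m + 1"
proof (cases "\<bar>D\<bar> \<le> 1")
  case True
  thus ?thesis using assms(1) by (simp add: power_le_one zero_le_even_power add_increasing)
next
  case False
  hence "\<bar>D\<bar> ^ k \<le> \<bar>D\<bar> ^ m" using assms(2) by (intro power_increasing) auto
  thus ?thesis using assms(1) by (simp add: power_even_abs)
qed

lemma power_le_Suc_power:
  fixes D :: real assumes "D \<ge> 0" "k \<le> Suc m" shows "D ^ k \<le> (D + 1) * (D ^ m + 1)"
proof (cases "D \<le> 1")
  case True
  hence "D ^ k \<le> 1" using assms by (simp add: power_le_one)
  moreover have "1 * 1 \<le> (D + 1) * (D ^ m + 1)" using assms by (intro mult_mono) auto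
  ultimately show ?thesis by simp
next
  case False
  hence "D ^ k \<le> D * D ^ m" using assms(2) power_increasing[of k "Suc m" D] by simp
  also have "\<dots> \<le> (D + 1) * (D ^ m + 1)" using assms by (intro mult_mono) auto
  finally show ?thesis .
qed

lemma sum_choose_le: "m \<le> n \<Longrightarrow> (\<Sum>k\<le>m. real (n choose k)) \<le> 2 ^ n"
  using sum_mono2[of "{..n}" "{..m}" "\<lambda>k. real (n choose k)"] choose_row_sum[of n]
  by (simp flip: of_nat_sum)

lemma binomial_plus_minus_one:
  fixes D :: real
  shows "(D + 1) ^ n = (\<Sum>k\<le>n. real (n choose k) * D ^ k)"
    and "(D - 1) ^ n = (\<Sum>k\<le>n. real (n choose k) * D ^ k * (-1) ^ (n - k))"
  using binomial_ring[of D 1 n] binomial_ring[of D "-1" n] by simp_all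

lemma even_part_le:
  fixes D :: real assumes "even m"
  shows "((D + 1) ^ (m + 2) + (D - 1) ^ (m + 2)) / 2 \<le> D ^ (m + 2) + 2 ^ (m + 2) * (D ^ m + 1)"
proof -
  define n where "n = m + 2"
  define T where "T k = real (n choose k) * D ^ k * (1 + (-1) ^ (n - k))" for k
  have "(D + 1) ^ n + (D - 1) ^ n = (\<Sum>k\<le>n. T k)"
    unfolding binomial_plus_minus_one T_def by (simp add: sum.distrib[symmetric] algebra_simps)
  also have "\<dots> = (\<Sum>k\<le>m. T k) + T (Suc m) + T n" by (simp add: n_def)
  also have "T (Suc m) = 0" by (simp add: T_def n_def Suc_diff_le)
  also have "T n = 2 * D ^ n" by (simp add: T_def)
  also have "(\<Sum>k\<le>m. T k) \<le> (\<Sum>k\<le>m. 2 * (D ^ m + 1) * real (n choose k))"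
  proof (rule sum_mono)
    fix k assume k: "k \<in> {..m}"
    have "\<bar>1 + (-1::real) ^ (n - k)\<bar> \<le> 2" by (cases "even (n - k)") auto
    hence "real (n choose k) * \<bar>D\<bar> ^ k * \<bar>1 + (-1::real) ^ (n - k)\<bar>
        \<le> real (n choose k) * (D ^ m + 1) * 2"
      using abs_power_le_even_power[OF assms, of k D] abs_power_le_even_power[OF assms, of 0 D] k
      by (intro mult_mono) auto
    moreover have "\<bar>T k\<bar> = real (n choose k) * \<bar>D\<bar> ^ k * \<bar>1 + (-1::real) ^ (n - k)\<bar>"
      by (simp add: T_def abs_mult power_abs)
    ultimately show "T k \<le> 2 * (D ^ m + 1) * real (n choose k)"
      using abs_ge_self[of "T k"] by (simp only: mult_ac)
  qed
  also have "\<dots> \<le> 2 * (D ^ m + 1) * 2 ^ n"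
    unfolding sum_distrib_left[symmetric]
    using sum_choose_le[of m n] abs_power_le_even_power[OF assms, of 0 D]
    by (intro mult_left_mono) (auto simp: n_def)
  finally show ?thesis by (simp add: n_def algebra_simps)
qed

lemma odd_part_le:
  fixes D :: real assumes "D \<ge> 0"
  shows "((D + 1) ^ (m + 2) - (D - 1) ^ (m + 2)) / 2 \<le> 2 ^ (m + 2) * (D + 1) * (D ^ m + 1)"
proof -
  define n where "n = m + 2"
  define T where "T k = real (n choose k) * D ^ k * (1 - (-1) ^ (n - k))" for k
  have "(D + 1) ^ n - (D - 1) ^ n = (\<Sum>k\<le>n. T k)"
    unfolding binomial_plus_minus_one T_def by (simp add: sum_subtractf[symmetric] algebra_simps)
  also have "\<dots> = (\<Sum>k\<le>Suc m. T k)" by (simp add: n_def T_def)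
  also have "\<dots> \<le> (\<Sum>k\<le>Suc m. 2 * ((D + 1) * (D ^ m + 1)) * real (n choose k))"
  proof (rule sum_mono)
    fix k assume k: "k \<in> {..Suc m}"
    have "0 \<le> 1 - (-1::real) ^ (n - k)" "1 - (-1::real) ^ (n - k) \<le> 2"
      by (cases "even (n - k)"; simp)+
    hence "real (n choose k) * D ^ k * (1 - (-1::real) ^ (n - k))
        \<le> real (n choose k) * ((D + 1) * (D ^ m + 1)) * 2"
      using power_le_Suc_power[OF assms, of k m] k assms by (intro mult_mono) auto
    thus "T k \<le> 2 * ((D + 1) * (D ^ m + 1)) * real (n choose k)"
      unfolding T_def by (simp only: mult_ac)
  qed
  also have "\<dots> \<le> 2 * ((D + 1) * (D ^ m + 1)) * 2 ^ n"
    unfolding sum_distrib_left[symmetric]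
    using sum_choose_le[of "Suc m" n] assms by (intro mult_left_mono) (auto simp: n_def)
  finally show ?thesis by (simp add: n_def algebra_simps)
qed

lemma odd_part_nonpos:
  fixes D :: real assumes "D \<le> 0" "even n" shows "(D + 1) ^ n - (D - 1) ^ n \<le> 0"
proof -
  have "\<bar>D + 1\<bar> ^ n \<le> \<bar>D - 1\<bar> ^ n" using assms by (intro power_mono) auto
  thus ?thesis using assms by (metis diff_le_0_iff_le power_even_abs)
qed

text \<open>Here D = a - y is the displacement of the walk now at a \<ge> 0 from its start y \<ge> 0.\<close>
lemma max_odd_part_div_le:
  fixes D a :: real assumes "even m" "D \<le> a" "0 \<le> a"
  shows "max (((D + 1) ^ (m + 2) - (D - 1) ^ (m + 2)) / 2) 0 / (a + 1) \<le> 2 ^ (m + 2) * (D ^ m + 1)"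
proof (cases "D \<ge> 0")
  case True
  have Dm: "0 \<le> D ^ m" using assms(1) by (simp add: zero_le_even_power)
  have "max (((D + 1) ^ (m + 2) - (D - 1) ^ (m + 2)) / 2) 0 \<le> 2 ^ (m + 2) * (D ^ m + 1) * (D + 1)"
    using odd_part_le[OF True, of m] True Dm by (simp add: algebra_simps)
  also have "\<dots> \<le> 2 ^ (m + 2) * (D ^ m + 1) * (a + 1)"
    using assms Dm by (intro mult_left_mono) auto
  finally show ?thesis using assms(3) by (simp add: divide_le_eq)
next
  case False
  thus ?thesis
    using odd_part_nonpos[of D "m + 2"] assms zero_le_even_power[of m D] by simp
qed

lemma moment_step:
  fixes y N m :: nat
  assumes "even m" "i < N"
  shows "(\<Sum>s\<in>nnpaths N y. (real (s ! Suc i) - real y) ^ (m + 2))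
    \<le> (\<Sum>s\<in>nnpaths N y. (real (s ! i) - real y) ^ (m + 2))
       + 2 * 2 ^ (m + 2) * ((\<Sum>s\<in>nnpaths N y. (real (s ! i) - real y) ^ m) + npaths N y)"
proof -
  define n where "n = m + 2"
  define E where "E D = ((D + 1) ^ n + (D - 1) ^ n) / 2" for D :: real
  define g where "g D = ((D + 1) ^ n - (D - 1) ^ n) / 2" for D :: real
  let ?D = "\<lambda>s. real (s ! i) - real y"
  have split: "(real (s ! Suc i) - real y) ^ n = E (?D s) + g (?D s) * (real (s ! Suc i) - real (s ! i))"
    if "s \<in> nnpaths N y" for s
  proof -
    have EG: "E D + g D = (D + 1) ^ n" "E D - g D = (D - 1) ^ n" for D
      by (simp_all add: E_def g_def field_simps)
    show ?thesis
    proof (cases "real (s ! Suc i) = real (s ! i) + 1")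
      case True
      hence "real (s ! Suc i) - real y = ?D s + 1" "real (s ! Suc i) - real (s ! i) = 1" by simp_all
      then show ?thesis by (simp only: EG(1)[symmetric])
    next
      case False
      hence "real (s ! Suc i) = real (s ! i) - 1" using nth_Suc_nnpaths[OF that assms(2)] by simp
      hence "real (s ! Suc i) - real y = ?D s - 1" "real (s ! Suc i) - real (s ! i) = - 1" by simp_all
      then show ?thesis by (simp only: EG(2)[symmetric])
    qed
  qed
  have "(\<Sum>s\<in>nnpaths N y. (real (s ! Suc i) - real y) ^ n)
      = (\<Sum>s\<in>nnpaths N y. E (?D s))
        + (\<Sum>s\<in>nnpaths N y. g (?D s) * (real (s ! Suc i) - real (s ! i)))"
    by (simp add: split sum.distrib cong: sum.cong)
  also have "\<dots> \<le> (\<Sum>s\<in>nnpaths N y. E (?D s) + max (g (?D s)) 0 / real (Suc (s ! i)))"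
    using sum_weighted_increment_le[OF assms(2), of "\<lambda>a. g (real a - real y)" y]
    by (simp add: sum.distrib)
  also have "\<dots> \<le> (\<Sum>s\<in>nnpaths N y. ?D s ^ n + 2 * 2 ^ n * (?D s ^ m + 1))"
  proof (rule sum_mono)
    fix s
    have "max (g (?D s)) 0 / real (Suc (s ! i)) \<le> 2 ^ n * (?D s ^ m + 1)"
      using max_odd_part_div_le[OF assms(1), of "?D s" "real (s ! i)"]
      by (simp add: g_def n_def add.commute)
    moreover have "E (?D s) \<le> ?D s ^ n + 2 ^ n * (?D s ^ m + 1)"
      using even_part_le[OF assms(1), of "?D s"] by (simp only: E_def n_def)
    ultimately show "E (?D s) + max (g (?D s)) 0 / real (Suc (s ! i))
        \<le> ?D s ^ n + 2 * 2 ^ n * (?D s ^ m + 1)"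
      by linarith
  qed
  also have "\<dots> = (\<Sum>s\<in>nnpaths N y. ?D s ^ n)
      + 2 * 2 ^ n * ((\<Sum>s\<in>nnpaths N y. ?D s ^ m) + npaths N y)"
    by (simp add: sum.distrib sum_distrib_left npaths_def distrib_left)
  finally show ?thesis by (simp only: n_def)
qed

lemma power_Suc_growth_le:
  fixes j c :: real
  assumes "0 \<le> j" "0 \<le> c"
  shows "(c + 1) * j ^ Suc q + (c * j ^ q + 1) \<le> (c + 1) * (j + 1) ^ Suc q"
proof -
  have jq: "j ^ q \<le> (j + 1) ^ q" "1 \<le> (j + 1) ^ q"
    using assms(1) by (auto intro: power_mono one_le_power)
  have "c * j ^ q + 1 \<le> (c + 1) * (j + 1) ^ q"
    using mult_left_mono[OF jq(1) assms(2)] jq(2) by (simp add: algebra_simps)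
  moreover have "j ^ Suc q + (j + 1) ^ q \<le> (j + 1) ^ Suc q"
    using mult_left_mono[OF jq(1) assms(1)] by (simp add: algebra_simps)
  ultimately show ?thesis
    using mult_left_mono[of _ _ "c + 1"] assms(2) by (fastforce simp: algebra_simps)
qed

lemma even_moment_bound:
  "\<exists>C\<ge>0. \<forall>N y j. j \<le> N \<longrightarrow>
     (\<Sum>s\<in>nnpaths N y. (real (s ! j) - real y) ^ (2 * q)) \<le> C * real j ^ q * npaths N y"
proof (induction q)
  case 0 thus ?case by (intro exI[of _ 1]) (simp add: npaths_def)
next
  case (Suc q)
  then obtain C' where C': "C' \<ge> 0" "\<And>N y j. j \<le> N \<Longrightarrow>
     (\<Sum>s\<in>nnpaths N y. (real (s ! j) - real y) ^ (2 * q)) \<le> C' * real j ^ q * npaths N y"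
    by blast
  define K :: real where "K = 2 * 2 ^ (2 * q + 2)"
  have "(\<Sum>s\<in>nnpaths N y. (real (s ! j) - real y) ^ (2 * Suc q))
      \<le> K * (C' + 1) * real j ^ Suc q * npaths N y" if "j \<le> N" for N y j
    using that
  proof (induction j)
    case 0 thus ?case by (simp add: nth_0_nnpaths)
  next
    case (Suc j)
    have "(\<Sum>s\<in>nnpaths N y. (real (s ! Suc j) - real y) ^ (2 * Suc q))
      \<le> (\<Sum>s\<in>nnpaths N y. (real (s ! j) - real y) ^ (2 * Suc q))
       + K * ((\<Sum>s\<in>nnpaths N y. (real (s ! j) - real y) ^ (2 * q)) + npaths N y)"
      using moment_step[of "2 * q" j N y] Suc.prems by (simp add: K_def mult_2_right)
    also have "\<dots> \<le> (K * (C' + 1) * real j ^ Suc q + K * (C' * real j ^ q + 1)) * npaths N y"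
      using Suc.IH Suc.prems C'(2)[of j N y]
      by (simp add: K_def algebra_simps add_mono mult_left_mono)
    also have "\<dots> \<le> K * (C' + 1) * real (Suc j) ^ Suc q * npaths N y"
      using mult_left_mono[OF power_Suc_growth_le[of "real j" C' q], of K] C'(1) npaths_pos[of N y]
      by (intro mult_right_mono) (auto simp: K_def algebra_simps)
    finally show ?case .
  qed
  thus ?case using C'(1) by (intro exI[of _ "K * (C' + 1)"]) (simp add: K_def)
qed

lemma increment_moment_bound:
  "\<exists>C\<ge>0. \<forall>n x m k. m \<le> k \<longrightarrow> k \<le> n \<longrightarrow>
     (\<Sum>s\<in>nnpaths n x. (real (s ! k) - real (s ! m)) ^ (2 * q)) \<le> C * real (k - m) ^ q * npaths n x"
proof -
  obtain C where C: "C \<ge> 0" "\<And>N y j. j \<le> N \<Longrightarrow>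
     (\<Sum>s\<in>nnpaths N y. (real (s ! j) - real y) ^ (2 * q)) \<le> C * real j ^ q * npaths N y"
    using even_moment_bound[of q] by blast
  have "(\<Sum>s\<in>nnpaths n x. (real (s ! k) - real (s ! m)) ^ (2 * q)) \<le> C * real (k - m) ^ q * npaths n x"
    if mk: "m \<le> k" "k \<le> n" for n x m k
  proof -
    have "drop m s ! (k - m) = s ! k" "drop m s ! 0 = s ! m" if "s \<in> nnpaths n x" for s
      using length_nnpaths[OF that] mk by simp_all
    moreover have "(\<Sum>s\<in>nnpaths n x. (real (drop m s ! (k - m)) - real (drop m s ! 0)) ^ (2 * q))
        \<le> (\<Sum>s\<in>nnpaths n x. C * real (k - m) ^ q)"
    proof (rule sum_nnpaths_drop_mono)
      fix z
      show "(\<Sum>t\<in>nnpaths (n - m) z. (real (t ! (k - m)) - real (t ! 0)) ^ (2 * q))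
          \<le> (\<Sum>t\<in>nnpaths (n - m) z. C * real (k - m) ^ q)"
        using C(2)[of "k - m" "n - m" z] mk by (simp add: nth_0_nnpaths npaths_def mult_ac)
    qed (use mk in simp)
    ultimately show ?thesis by (simp add: npaths_def mult.commute cong: sum.cong)
  qed
  thus ?thesis using C(1) by blast
qed

lemma powr_half_le_one_plus_power:
  fixes u p :: real assumes "u > 0" "0 \<le> p" "real q \<ge> p / 2"
  shows "u powr (p / 2) \<le> 1 + u ^ q"
proof (cases "u \<le> 1")
  case True
  hence "u powr (p / 2) \<le> u powr 0" using assms by (intro powr_mono') auto
  moreover have "0 \<le> u ^ q" "u powr 0 = 1" using assms by simp_all
  ultimately show ?thesis by linarith
next
  case False
  hence "u powr (p / 2) \<le> u powr (real q)" using assms by (intro powr_mono) auto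
  thus ?thesis using assms by (simp add: powr_realpow)
qed

lemma abs_powr_le_scaled_even_power:
  fixes X p :: real assumes "j > 0" "p > 0" "real q \<ge> p / 2"
  shows "\<bar>X\<bar> powr p \<le> real j powr (p / 2) * (1 + X ^ (2 * q) / real j ^ q)"
proof (cases "X = 0")
  case True
  thus ?thesis using assms by (simp add: power_mult)
next
  case False
  define u where "u = X\<^sup>2 / real j"
  have u: "u > 0" using False assms by (simp add: u_def)
  have "\<bar>X\<bar> powr p = (\<bar>X\<bar> powr 2) powr (p / 2)"
    unfolding powr_powr by simp
  also have "\<bar>X\<bar> powr 2 = real j * u" using False assms by (simp add: u_def powr_realpow)
  also have "(real j * u) powr (p / 2) = real j powr (p / 2) * u powr (p / 2)"
    using u assms by (simp add: powr_mult)
  also have "\<dots> \<le> real j powr (p / 2) * (1 + u ^ q)"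
    using powr_half_le_one_plus_power[of u p q] u assms by (intro mult_left_mono) auto
  finally show ?thesis by (simp add: u_def power_divide power_mult)
qed

lemma sum_abs_powr_le_of_even_moment:
  fixes X :: "'a \<Rightarrow> real" and p C :: real
  assumes "j > 0" "p > 0" "real q \<ge> p / 2"
    and moment: "(\<Sum>s\<in>A. X s ^ (2 * q)) \<le> C * real j ^ q * real (card A)"
  shows "(\<Sum>s\<in>A. \<bar>X s\<bar> powr p) \<le> (1 + C) * real j powr (p / 2) * real (card A)"
proof -
  have "(\<Sum>s\<in>A. \<bar>X s\<bar> powr p)
      \<le> (\<Sum>s\<in>A. real j powr (p / 2) * (1 + X s ^ (2 * q) / real j ^ q))"
    by (intro sum_mono abs_powr_le_scaled_even_power assms)
  also have "\<dots> = real j powr (p / 2) * (real (card A) + (\<Sum>s\<in>A. X s ^ (2 * q)) / real j ^ q)"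
    by (simp add: sum_distrib_left[symmetric] sum.distrib sum_divide_distrib)
  also have "\<dots> \<le> real j powr (p / 2) * (real (card A) + C * real (card A))"
    using moment assms(1) by (intro mult_left_mono add_left_mono) (auto simp: divide_le_eq algebra_simps)
  finally show ?thesis by (simp add: algebra_simps)
qed

theorem corollaryA10:
  fixes p :: real
  assumes "p > 0"
  shows "\<exists>C>0. \<forall>x n k m :: nat. m \<le> k \<longrightarrow> k \<le> n \<longrightarrow>
           Ewalk n x (\<lambda>s. \<bar>real (s ! k) - real (s ! m)\<bar> powr p)
             \<le> C * real (k - m) powr (p / 2)"
proof -
  define q where "q = nat \<lceil>p\<rceil>"
  have q: "real q \<ge> p / 2" using assms unfolding q_def by linarith
  obtain C where C: "C \<ge> 0" "\<And>n x m k. m \<le> k \<Longrightarrow> k \<le> n \<Longrightarrow>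
     (\<Sum>s\<in>nnpaths n x. (real (s ! k) - real (s ! m)) ^ (2 * q)) \<le> C * real (k - m) ^ q * npaths n x"
    using increment_moment_bound[of q] by blast
  have "Ewalk n x (\<lambda>s. \<bar>real (s ! k) - real (s ! m)\<bar> powr p)
      \<le> (1 + C) * real (k - m) powr (p / 2)"
    if "m \<le> k" "k \<le> n" for x n k m
  proof (cases "m = k")
    case False
    hence "(\<Sum>s\<in>nnpaths n x. \<bar>real (s ! k) - real (s ! m)\<bar> powr p)
        \<le> (1 + C) * real (k - m) powr (p / 2) * real (card (nnpaths n x))"
      using that C(2)[of m k n x]
      by (intro sum_abs_powr_le_of_even_moment[OF _ assms q]) (auto simp: npaths_def)
    thus ?thesis using npaths_pos[of n x] by (simp add: Ewalk_def npaths_def divide_le_eq)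
  qed (use assms in \<open>simp add: Ewalk_def\<close>)
  thus ?thesis using C(1) by (intro exI[of _ "1 + C"]) auto
qed

end
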